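(* Let $X$ be a finite set, let $N$ be a rooted phylogenetic network on $X$, and let $\widetilde{N}$ be its normalisation. Then: (a) $\widetilde{N}$ has no shortcuts, i.e. no arc $(u,v)$ such that $\widetilde{N}$ also contains a directed path of length at least $2$ from $u$ to $v$; (b) $\widetilde{N}$ is a rooted phylogenetic network on $X$.
   Context: A rooted phylogenetic network on a finite set $X$ is a finite acyclic directed graph $N$ with a single vertex of in-degree $0$ (the root $\rho$), all other vertices being of one of three types: (1) in-degree $1$ and out-degree $0$ (the leaves, which form exactly the set $X$); (2) in-degree $1$ and out-degree at least $2$; (3) out-degree $1$ and in-degree at least $2$ (reticulate vertices). A vertex $v$ of $N$ is visible if there is a leaf $x\in X$ such that every directed path from $\rho$ to $x$ passes through $v$; the root and all leaves are visible. Let $V_{\rm vis}(N)$ be the set of visible vertices. Define the directed graph ${\rm Cov}(N)$ with vertex set $V_{\rm vis}(N)$ as follows: for each pair $u\neq v$ of visible vertices such that $N$ has a directed path from $u$ to $v$, put an arc $(u,v)$; then delete every arc $(u,v)$ for which there is also a directed path of length at least $2$ from $u$ to $v$ in this graph (so ${\rm Cov}(N)$ is the Hasse diagram of the reachability partial order on $V_{\rm vis}(N)$). A vertex is subdividing if its in-degree and out-degree are both $1$. The normalisation $\widetilde{N}$ of $N$ is the directed graph obtained from ${\rm Cov}(N)$ by suppressing every subdividing vertex (i.e. replacing each maximal path whose interior vertices are subdividing by a single arc between its endpoints). *)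

theory Defs
  imports Main
begin

definition indeg :: "('v \<times> 'v) set \<Rightarrow> 'v \<Rightarrow> nat" where
  "indeg A v = card {u. (u, v) \<in> A}"

definition outdeg :: "('v \<times> 'v) set \<Rightarrow> 'v \<Rightarrow> nat" where
  "outdeg A v = card {w. (v, w) \<in> A}"

definition phylo_network :: "'v set \<Rightarrow> 'v set \<Rightarrow> ('v \<times> 'v) set \<Rightarrow> bool" where
  "phylo_network X V A \<longleftrightarrow>
     finite V \<and> A \<subseteq> V \<times> V \<and> acyclic A \<and>
     (\<exists>!\<rho>. \<rho> \<in> V \<and> indeg A \<rho> = 0) \<and>
     (\<forall>v\<in>V. indeg A v \<noteq> 0 \<longrightarrow>
        (indeg A v = 1 \<and> outdeg A v = 0) \<or>
        (indeg A v = 1 \<and> outdeg A v \<ge> 2) \<or>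
        (outdeg A v = 1 \<and> indeg A v \<ge> 2)) \<and>
     X = {v \<in> V. indeg A v = 1 \<and> outdeg A v = 0}"

definition root :: "'v set \<Rightarrow> ('v \<times> 'v) set \<Rightarrow> 'v" where
  "root V A = (THE \<rho>. \<rho> \<in> V \<and> indeg A \<rho> = 0)"

definition dpath :: "('v \<times> 'v) set \<Rightarrow> 'v list \<Rightarrow> bool" where
  "dpath A p \<longleftrightarrow> p \<noteq> [] \<and> (\<forall>i. Suc i < length p \<longrightarrow> (p ! i, p ! Suc i) \<in> A)"

definition visible :: "'v set \<Rightarrow> 'v set \<Rightarrow> ('v \<times> 'v) set \<Rightarrow> 'v \<Rightarrow> bool" where
  "visible X V A v \<longleftrightarrow> v \<in> V \<and>
     (v = root V A \<or> v \<in> X \<or>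
      (\<exists>x\<in>X. \<forall>p. dpath A p \<and> hd p = root V A \<and> last p = x \<longrightarrow> v \<in> set p))"

definition Vvis :: "'v set \<Rightarrow> 'v set \<Rightarrow> ('v \<times> 'v) set \<Rightarrow> 'v set" where
  "Vvis X V A = {v. visible X V A v}"

definition reach_vis :: "'v set \<Rightarrow> 'v set \<Rightarrow> ('v \<times> 'v) set \<Rightarrow> ('v \<times> 'v) set" where
  "reach_vis X V A = {(u, v). u \<in> Vvis X V A \<and> v \<in> Vvis X V A \<and> u \<noteq> v \<and> (u, v) \<in> A\<^sup>+}"

definition CovA :: "'v set \<Rightarrow> 'v set \<Rightarrow> ('v \<times> 'v) set \<Rightarrow> ('v \<times> 'v) set" where
  "CovA X V A = {e \<in> reach_vis X V A. e \<notin> reach_vis X V A O (reach_vis X V A)\<^sup>+}"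

definition subdividing :: "('v \<times> 'v) set \<Rightarrow> 'v \<Rightarrow> bool" where
  "subdividing E v \<longleftrightarrow> indeg E v = 1 \<and> outdeg E v = 1"

text \<open>Suppression of all subdividing vertices of the digraph (W, E): the remaining vertices are
  the non-subdividing ones, and a and b are joined iff E has a path from a to b of length at least 1
  all of whose interior vertices are subdividing.\<close>
definition suppV :: "'v set \<Rightarrow> ('v \<times> 'v) set \<Rightarrow> 'v set" where
  "suppV W E = {v \<in> W. \<not> subdividing E v}"

definition suppA :: "'v set \<Rightarrow> ('v \<times> 'v) set \<Rightarrow> ('v \<times> 'v) set" where
  "suppA W E = {(a, b). a \<in> suppV W E \<and> b \<in> suppV W E \<and>
      (a, b) \<in> {(x, y) \<in> E. subdividing E y}\<^sup>* O E}"

definition normV :: "'v set \<Rightarrow> 'v set \<Rightarrow> ('v \<times> 'v) set \<Rightarrow> 'v set" where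
  "normV X V A = suppV (Vvis X V A) (CovA X V A)"

definition normA :: "'v set \<Rightarrow> 'v set \<Rightarrow> ('v \<times> 'v) set \<Rightarrow> ('v \<times> 'v) set" where
  "normA X V A = suppA (Vvis X V A) (CovA X V A)"

end

theory Submission
  imports Defs
begin

(* Cov(N) is the Hasse diagram of the reachability order on the visible vertices, so its
   transitive closure is that order. The unique parent of a visible tree vertex and the unique
   child of a visible reticulation are again visible and are its only neighbours in Cov(N);
   hence every vertex of Cov(N) other than the root and the leaves has in- or out-degree 1.

   The key point: if y is subdividing in Cov(N) with child b, and a is a visible proper
   ancestor of y, then every path of Cov(N) from a to b passes through y, since otherwise the
   leaf witnessing the visibility of y would be reachable from the root avoiding y. It follows
   that every visible vertex strictly between the ends of a chain a -> s -> ... -> b with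
   subdividing interior vertices lies on that chain. This excludes shortcuts in the
   normalisation, and it shows that distinct arcs at a non-subdividing vertex start distinct
   chains, so suppression preserves the in- and out-degrees of the remaining vertices. *)

section \<open>Paths avoiding a vertex\<close>

lemma dpath_Cons_iff: "dpath r (a # q) \<longleftrightarrow> q = [] \<or> (a, hd q) \<in> r \<and> dpath r q"
proof (cases q)
  case (Cons b q')
  have "(\<forall>i. Suc i < length (a # q) \<longrightarrow> ((a # q) ! i, (a # q) ! Suc i) \<in> r) \<longleftrightarrow>
        (a, b) \<in> r \<and> (\<forall>i. Suc i < length q \<longrightarrow> (q ! i, q ! Suc i) \<in> r)"
    unfolding Cons by (auto simp: All_less_Suc2)
  then show ?thesis by (simp add: dpath_def Cons)
qed (simp add: dpath_def)

lemma rtrancl_Restr_if_dpath: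
  "dpath r p \<Longrightarrow> set p \<subseteq> S \<Longrightarrow> (hd p, last p) \<in> (Restr r S)\<^sup>*"
proof (induction p)
  case (Cons a q)
  show ?case
  proof (cases "q = []")
    case False
    with Cons have "(a, hd q) \<in> Restr r S" "(hd q, last q) \<in> (Restr r S)\<^sup>*"
      by (auto simp: dpath_Cons_iff hd_in_set)
    with False show ?thesis by (auto intro: converse_rtrancl_into_rtrancl)
  qed simp
qed (simp add: dpath_def)

lemma dpath_if_rtrancl_Restr:
  "(a, b) \<in> (Restr r S)\<^sup>* \<Longrightarrow> a \<in> S \<Longrightarrow> \<exists>p. dpath r p \<and> hd p = a \<and> last p = b \<and> set p \<subseteq> S"
proof (induction rule: converse_rtrancl_induct)
  case base
  then show ?case by (intro exI[of _ "[b]"]) (simp add: dpath_def)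
next
  case (step a c)
  then obtain p where p: "dpath r p" "hd p = c" "last p = b" "set p \<subseteq> S" by auto
  then have "p \<noteq> []" by (simp add: dpath_def)
  with p step show ?case
    by (intro exI[of _ "a # p"]) (auto simp: dpath_Cons_iff)
qed

lemma ex_dpath_avoiding_iff:
  "(\<exists>p. dpath r p \<and> hd p = a \<and> last p = b \<and> v \<notin> set p) \<longleftrightarrow>
   a \<noteq> v \<and> (a, b) \<in> (Restr r (- {v}))\<^sup>*"
proof
  assume "\<exists>p. dpath r p \<and> hd p = a \<and> last p = b \<and> v \<notin> set p"
  then obtain p where "dpath r p" "hd p = a" "last p = b" "v \<notin> set p" by blast
  moreover from this have "a \<in> set p" by (auto simp: dpath_def)
  ultimately show "a \<noteq> v \<and> (a, b) \<in> (Restr r (- {v}))\<^sup>*"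
    using rtrancl_Restr_if_dpath[of r p "- {v}"] by auto
next
  assume "a \<noteq> v \<and> (a, b) \<in> (Restr r (- {v}))\<^sup>*"
  then show "\<exists>p. dpath r p \<and> hd p = a \<and> last p = b \<and> v \<notin> set p"
    using dpath_if_rtrancl_Restr[of a b r "- {v}"] by auto
qed

lemma rtrancl_Restr_if_not_reaching_end:
  assumes "(a, b) \<in> r\<^sup>*" "(v, b) \<notin> r\<^sup>*"
  shows "(a, b) \<in> (Restr r (- {v}))\<^sup>*"
  using assms
proof (induction rule: converse_rtrancl_induct)
  case (step a c)
  have "(a, b) \<in> r\<^sup>*" using step.hyps by (rule converse_rtrancl_into_rtrancl)
  with step have "(a, c) \<in> Restr r (- {v})" by auto
  from converse_rtrancl_into_rtrancl[OF this] step show ?case by blast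
qed simp

lemma rtrancl_Restr_if_not_reached_from_start:
  assumes "(a, b) \<in> r\<^sup>*" "(a, v) \<notin> r\<^sup>*"
  shows "(a, b) \<in> (Restr r (- {v}))\<^sup>*"
  using assms
proof (induction rule: rtrancl_induct)
  case (step c b)
  have "(a, b) \<in> r\<^sup>*" using step.hyps by (rule rtrancl_into_rtrancl)
  with step have "(c, b) \<in> Restr r (- {v})" by auto
  from rtrancl_into_rtrancl[OF _ this] step show ?case by blast
qed simp

lemma rtrancl_Restr_or_through:
  assumes "(a, b) \<in> r\<^sup>*"
  shows "(a, b) \<in> (Restr r (- {v}))\<^sup>* \<or> (a, v) \<in> r\<^sup>* \<and> (v, b) \<in> r\<^sup>*"
  using rtrancl_Restr_if_not_reaching_end[OF assms] rtrancl_Restr_if_not_reached_from_start[OF assms]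
  by blast

lemma rtrancl_Restr_switch_unique_pred:
  assumes pred: "\<And>u. (u, v) \<in> r \<Longrightarrow> u = p" and "a \<noteq> v"
    and "(a, b) \<in> (Restr r (- {p}))\<^sup>*"
  shows "(a, b) \<in> (Restr r (- {v}))\<^sup>*"
proof -
  have "(a, b) \<in> (Restr r (- {v}))\<^sup>* \<and> b \<noteq> v"
    using assms(3)
  proof (induction rule: rtrancl_induct)
    case (step c d)
    then have "(c, d) \<in> Restr r (- {v})" using pred by auto
    with step show ?case by (auto intro: rtrancl_into_rtrancl)
  qed (use \<open>a \<noteq> v\<close> in simp)
  then show ?thesis ..
qed

lemma rtrancl_Restr_switch_unique_succ:
  assumes "\<And>w. (v, w) \<in> r \<Longrightarrow> w = c" and "b \<noteq> v"
    and "(a, b) \<in> (Restr r (- {c}))\<^sup>*"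
  shows "(a, b) \<in> (Restr r (- {v}))\<^sup>*"
proof -
  have conv: "Restr (r\<inverse>) S = (Restr r S)\<inverse>" for S by auto
  have "(b, a) \<in> (Restr (r\<inverse>) (- {c}))\<^sup>*"
    using assms(3) by (simp add: conv rtrancl_converse)
  moreover have "\<And>u. (u, v) \<in> r\<inverse> \<Longrightarrow> u = c" using assms(1) by auto
  ultimately have "(b, a) \<in> (Restr (r\<inverse>) (- {v}))\<^sup>*"
    using rtrancl_Restr_switch_unique_pred[where r="r\<inverse>" and p=c and a=b and b=a] assms(2) by blast
  then show ?thesis by (simp add: conv rtrancl_converse)
qed

section \<open>Covers of a finite strict order\<close>

lemma trancl_covers_eq:
  assumes fin: "finite r" and tr: "trans r" and irr: "irrefl r"
  shows "{e \<in> r. e \<notin> r O r}\<^sup>+ = r"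
proof
  show "{e \<in> r. e \<notin> r O r}\<^sup>+ \<subseteq> r"
  proof
    fix e assume "e \<in> {e \<in> r. e \<notin> r O r}\<^sup>+"
    then have "e \<in> r\<^sup>+" by (rule trancl_mono) blast
    then show "e \<in> r" using tr by simp
  qed
  let ?I = "\<lambda>a b. {w. (a, w) \<in> r \<and> (w, b) \<in> r}"
  have "(a, b) \<in> {e \<in> r. e \<notin> r O r}\<^sup>+" if "(a, b) \<in> r" for a b
    using that
  proof (induction "card (?I a b)" arbitrary: a b rule: less_induct)
    case less
    show ?case
    proof (cases "(a, b) \<in> r O r")
      case True
      then obtain z where az: "(a, z) \<in> r" and zb: "(z, b) \<in> r" by blast
      have fin_I: "finite (?I a b)"
        by (rule finite_subset[OF _ finite_Range[OF fin]]) (auto simp: Range_iff)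
      have "z \<in> ?I a b" "z \<notin> ?I a z" "z \<notin> ?I z b"
        using az zb irr by (auto dest: irreflD)
      moreover have "?I a z \<subseteq> ?I a b" "?I z b \<subseteq> ?I a b"
        using az zb tr by (auto dest: transD)
      ultimately have "?I a z \<subset> ?I a b" "?I z b \<subset> ?I a b" by blast+
      then have "(a, z) \<in> {e \<in> r. e \<notin> r O r}\<^sup>+" "(z, b) \<in> {e \<in> r. e \<notin> r O r}\<^sup>+"
        using less.hyps[OF psubset_card_mono[OF fin_I]] az zb by blast+
      then show ?thesis by (rule trancl_trans)
    qed (use less.prems in \<open>simp add: r_into_trancl\<close>)
  qed
  then show "r \<subseteq> {e \<in> r. e \<notin> r O r}\<^sup>+" by auto
qed

lemma lower_covers_eq_singleton:
  assumes tr: "trans r" and irr: "irrefl r" and pv: "(p, v) \<in> r"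
    and below: "\<And>u. (u, v) \<in> r \<Longrightarrow> u \<noteq> p \<Longrightarrow> (u, p) \<in> r"
  shows "{u. (u, v) \<in> r \<and> (u, v) \<notin> r O r} = {p}"
proof -
  have "(p, v) \<notin> r O r"
  proof
    assume "(p, v) \<in> r O r"
    then obtain z where "(p, z) \<in> r" "(z, v) \<in> r" by blast
    with below irr tr show False by (metis irreflD transD)
  qed
  moreover have "(u, v) \<in> r O r" if "(u, v) \<in> r" "u \<noteq> p" for u
    using below[OF that] pv by blast
  ultimately show ?thesis using pv by blast
qed

lemma upper_covers_eq_singleton:
  assumes tr: "trans r" and irr: "irrefl r" and vc: "(v, c) \<in> r"
    and above: "\<And>w. (v, w) \<in> r \<Longrightarrow> w \<noteq> c \<Longrightarrow> (c, w) \<in> r"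
  shows "{w. (v, w) \<in> r \<and> (v, w) \<notin> r O r} = {c}"
proof -
  have "(v, c) \<notin> r O r"
  proof
    assume "(v, c) \<in> r O r"
    then obtain z where "(v, z) \<in> r" "(z, c) \<in> r" by blast
    with above irr tr show False by (metis irreflD transD)
  qed
  moreover have "(v, w) \<in> r O r" if "(v, w) \<in> r" "w \<noteq> c" for w
    using above[OF that] vc by blast
  ultimately show ?thesis using vc by blast
qed

section \<open>Suppression of subdividing vertices\<close>

lemma card_functional_injective_rel:
  assumes "finite S" and "\<And>s. s \<in> S \<Longrightarrow> \<exists>!b. P s b"
    and "\<And>s s' b. s \<in> S \<Longrightarrow> s' \<in> S \<Longrightarrow> P s b \<Longrightarrow> P s' b \<Longrightarrow> s = s'"
  shows "card {b. \<exists>s\<in>S. P s b} = card S"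
proof -
  define f where "f s = (THE b. P s b)" for s
  have P_f: "P s b \<longleftrightarrow> b = f s" if "s \<in> S" for s b
    using theI'[OF assms(2)[OF that]] assms(2)[OF that] unfolding f_def by blast
  have "{b. \<exists>s\<in>S. P s b} = f ` S" using P_f by auto
  moreover have "inj_on f S" by (rule inj_onI) (use assms(3) P_f in blast)
  ultimately show ?thesis by (simp add: card_image)
qed

lemma finite_in_arcs: "finite E \<Longrightarrow> finite {u. (u, v) \<in> E}"
  by (rule finite_subset[OF _ finite_Domain]) auto

lemma finite_out_arcs: "finite E \<Longrightarrow> finite {w. (v, w) \<in> E}"
  by (rule finite_subset[OF _ finite_Range]) auto

lemma indeg_eq_0_iff: "finite E \<Longrightarrow> indeg E v = 0 \<longleftrightarrow> (\<forall>u. (u, v) \<notin> E)"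
  unfolding indeg_def using finite_in_arcs[of E v] by auto

lemma outdeg_eq_0_iff: "finite E \<Longrightarrow> outdeg E v = 0 \<longleftrightarrow> (\<forall>w. (v, w) \<notin> E)"
  unfolding outdeg_def using finite_out_arcs[of E v] by auto

lemma indeg_eq_1_iff: "indeg E v = 1 \<longleftrightarrow> (\<exists>u. {u. (u, v) \<in> E} = {u})"
  by (simp add: indeg_def card_1_singleton_iff)

lemma outdeg_eq_1_iff: "outdeg E v = 1 \<longleftrightarrow> (\<exists>w. {w. (v, w) \<in> E} = {w})"
  by (simp add: outdeg_def card_1_singleton_iff)

lemma indeg_1_unique: "indeg E v = 1 \<Longrightarrow> (u, v) \<in> E \<Longrightarrow> (u', v) \<in> E \<Longrightarrow> u = u'"
  unfolding indeg_eq_1_iff by (metis mem_Collect_eq singletonD)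

lemma outdeg_1_unique: "outdeg E v = 1 \<Longrightarrow> (v, w) \<in> E \<Longrightarrow> (v, w') \<in> E \<Longrightarrow> w = w'"
  unfolding outdeg_eq_1_iff by (metis mem_Collect_eq singletonD)

lemma subdividing_iff:
  "subdividing E v \<longleftrightarrow> (\<exists>u. {u. (u, v) \<in> E} = {u}) \<and> (\<exists>w. {w. (v, w) \<in> E} = {w})"
  unfolding subdividing_def indeg_eq_1_iff outdeg_eq_1_iff ..

abbreviation into_subdividing :: "('v \<times> 'v) set \<Rightarrow> ('v \<times> 'v) set" where
  "into_subdividing E \<equiv> {(x, y) \<in> E. subdividing E y}"

abbreviation out_of_subdividing :: "('v \<times> 'v) set \<Rightarrow> ('v \<times> 'v) set" where
  "out_of_subdividing E \<equiv> {(x, y) \<in> E. subdividing E x}"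

lemma single_valued_out_of_subdividing: "single_valued (out_of_subdividing E)"
  unfolding single_valued_def subdividing_def by (auto intro: outdeg_1_unique)

lemma single_valued_converse_into_subdividing: "single_valued ((into_subdividing E)\<inverse>)"
  unfolding single_valued_def subdividing_def by (auto intro: indeg_1_unique)

lemma rtrancl_out_of_subdividing_subset: "(out_of_subdividing E)\<^sup>* \<subseteq> E\<^sup>*"
  by (rule rtrancl_mono) auto

lemma rtrancl_out_of_subdividing_from_non_subdividing:
  "(s, b) \<in> (out_of_subdividing E)\<^sup>* \<Longrightarrow> \<not> subdividing E s \<Longrightarrow> b = s"
  by (auto elim: converse_rtranclE)

lemma rtrancl_into_subdividing_to_non_subdividing:
  "(a, p) \<in> (into_subdividing E)\<^sup>* \<Longrightarrow> \<not> subdividing E p \<Longrightarrow> a = p"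
  by (auto elim: rtranclE)

text \<open>Both sides consist of the paths of positive length all of whose interior vertices
  satisfy \<open>P\<close>.\<close>
lemma rtrancl_target_restricted_O_eq:
  "{(x, y) \<in> E. P y}\<^sup>* O E = E O {(x, y) \<in> E. P x}\<^sup>*"
proof (intro equalityI subsetI; clarify)
  fix a p b assume "(a, p) \<in> {(x, y) \<in> E. P y}\<^sup>*" "(p, b) \<in> E"
  then show "(a, b) \<in> E O {(x, y) \<in> E. P x}\<^sup>*"
  proof (induction arbitrary: b rule: rtrancl_induct)
    case (step p q)
    from step.IH[of q] step.hyps(2) obtain s
      where "(a, s) \<in> E" "(s, q) \<in> {(x, y) \<in> E. P x}\<^sup>*" by auto
    moreover have "(q, b) \<in> {(x, y) \<in> E. P x}" using step by auto
    ultimately show ?case by (auto intro: relcompI rtrancl_into_rtrancl)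
  qed blast
next
  fix a s b assume "(a, s) \<in> E" and sb: "(s, b) \<in> {(x, y) \<in> E. P x}\<^sup>*"
  from sb \<open>(a, s) \<in> E\<close> show "(a, b) \<in> {(x, y) \<in> E. P y}\<^sup>* O E"
  proof (induction arbitrary: a rule: converse_rtrancl_induct)
    case (step s t)
    from step.IH[of s] step.hyps(1) obtain p
      where "(s, p) \<in> {(x, y) \<in> E. P y}\<^sup>*" "(p, b) \<in> E" by auto
    moreover have "(a, s) \<in> {(x, y) \<in> E. P y}" using step by auto
    ultimately show ?case by (auto intro: relcompI converse_rtrancl_into_rtrancl)
  qed blast
qed

locale suppression =
  fixes W :: "'v set" and E :: "('v \<times> 'v) set"
  assumes finite_arcs: "finite E" and acyclic_arcs: "acyclic E" and arcs_subset: "E \<subseteq> W \<times> W"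
begin

lemma suppA_iff:
  "(a, b) \<in> suppA W E \<longleftrightarrow>
   a \<in> suppV W E \<and> b \<in> suppV W E \<and> (a, b) \<in> E O (out_of_subdividing E)\<^sup>*"
  unfolding suppA_def using rtrancl_target_restricted_O_eq[of E "subdividing E"] by auto

lemma suppA_subset: "suppA W E \<subseteq> suppV W E \<times> suppV W E"
  unfolding suppA_def by auto

lemma suppA_subset_trancl: "suppA W E \<subseteq> E\<^sup>+"
proof -
  have "(into_subdividing E)\<^sup>* O E \<subseteq> E\<^sup>* O E"
    by (intro relcomp_mono rtrancl_mono) auto
  then show ?thesis
    unfolding suppA_def by (auto simp: rtrancl_into_trancl1)
qed

lemma acyclic_suppA: "acyclic (suppA W E)"
proof (rule acyclic_subset[OF _ suppA_subset_trancl])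
  show "acyclic (E\<^sup>+)"
    using acyclic_arcs by (simp add: acyclic_def trancl_id[OF trans_trancl])
qed

lemma wf_out_of_subdividing: "wf ((out_of_subdividing E)\<inverse>)"
  by (rule finite_acyclic_wf_converse)
    (auto intro: finite_subset[OF _ finite_arcs] acyclic_subset[OF acyclic_arcs])

lemma wf_into_subdividing: "wf (into_subdividing E)"
  by (rule finite_acyclic_wf)
    (auto intro: finite_subset[OF _ finite_arcs] acyclic_subset[OF acyclic_arcs])

lemma chain_end_exists: "s \<in> W \<Longrightarrow> \<exists>b \<in> suppV W E. (s, b) \<in> (out_of_subdividing E)\<^sup>*"
  using wf_out_of_subdividing
proof (induction s rule: wf_induct_rule)
  case (less s)
  show ?case
  proof (cases "subdividing E s")
    case True
    then obtain z where sz: "(s, z) \<in> E" by (auto simp: subdividing_iff)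
    with True less.IH[of z] arcs_subset obtain b where "b \<in> suppV W E" "(z, b) \<in> (out_of_subdividing E)\<^sup>*"
      by blast
    moreover have "(s, z) \<in> out_of_subdividing E" using True sz by simp
    ultimately show ?thesis by (meson converse_rtrancl_into_rtrancl)
  qed (use less.prems in \<open>auto simp: suppV_def\<close>)
qed

lemma chain_start_exists: "p \<in> W \<Longrightarrow> \<exists>a \<in> suppV W E. (a, p) \<in> (into_subdividing E)\<^sup>*"
  using wf_into_subdividing
proof (induction p rule: wf_induct_rule)
  case (less p)
  show ?case
  proof (cases "subdividing E p")
    case True
    then obtain z where zp: "(z, p) \<in> E" by (auto simp: subdividing_iff)
    with True less.IH[of z] arcs_subset obtain a where "a \<in> suppV W E" "(a, z) \<in> (into_subdividing E)\<^sup>*"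
      by blast
    moreover have "(z, p) \<in> into_subdividing E" using True zp by simp
    ultimately show ?thesis by (meson rtrancl_into_rtrancl)
  qed (use less.prems in \<open>auto simp: suppV_def\<close>)
qed

lemma chain_end_unique:
  assumes "(s, b) \<in> (out_of_subdividing E)\<^sup>*" "(s, b') \<in> (out_of_subdividing E)\<^sup>*"
    and "\<not> subdividing E b" "\<not> subdividing E b'"
  shows "b = b'"
  using single_valued_confluent[OF single_valued_out_of_subdividing assms(1,2)]
    rtrancl_out_of_subdividing_from_non_subdividing[OF _ assms(3)]
    rtrancl_out_of_subdividing_from_non_subdividing[OF _ assms(4)] by blast

lemma chain_start_unique:
  assumes "(a, p) \<in> (into_subdividing E)\<^sup>*" "(a', p) \<in> (into_subdividing E)\<^sup>*"
    and "\<not> subdividing E a" "\<not> subdividing E a'"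
  shows "a = a'"
proof -
  have "(p, a) \<in> ((into_subdividing E)\<inverse>)\<^sup>*" "(p, a') \<in> ((into_subdividing E)\<inverse>)\<^sup>*"
    using assms(1,2) by (simp_all add: rtrancl_converse)
  from single_valued_confluent[OF single_valued_converse_into_subdividing this]
  show ?thesis
    using rtrancl_into_subdividing_to_non_subdividing[OF _ assms(3)]
      rtrancl_into_subdividing_to_non_subdividing[OF _ assms(4)]
    by (auto simp: rtrancl_converse)
qed

lemma first_arc_of_chain:
  assumes "(a, p) \<in> (into_subdividing E)\<^sup>+" and "(p, b) \<in> E"
  shows "\<exists>s. (a, s) \<in> E \<and> (s, p) \<in> (out_of_subdividing E)\<^sup>* \<and> (s, b) \<in> (out_of_subdividing E)\<^sup>*"
proof -
  obtain q where "(a, q) \<in> (into_subdividing E)\<^sup>*" and qp: "(q, p) \<in> into_subdividing E"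
    using assms(1) by (auto dest: tranclD2)
  then have "(a, p) \<in> (into_subdividing E)\<^sup>* O E" by auto
  then obtain s where "(a, s) \<in> E" and sp: "(s, p) \<in> (out_of_subdividing E)\<^sup>*"
    using rtrancl_target_restricted_O_eq[of E "subdividing E"] by auto
  moreover have "(p, b) \<in> out_of_subdividing E" using qp assms(2) by simp
  ultimately show ?thesis by (meson rtrancl_into_rtrancl)
qed

lemma not_rtrancl_out_of_subdividing_back: "(q, b) \<in> E \<Longrightarrow> (b, q) \<notin> (out_of_subdividing E)\<^sup>*"
proof
  assume "(q, b) \<in> E" "(b, q) \<in> (out_of_subdividing E)\<^sup>*"
  then have "(b, b) \<in> E\<^sup>+" using rtrancl_out_of_subdividing_subset by (blast intro: rtrancl_into_trancl1)
  with acyclic_arcs show False by (simp add: acyclic_def)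
qed

lemma not_trancl_out_of_subdividing_between_preds:
  assumes qb: "(q, b) \<in> E" and q'b: "(q', b) \<in> E"
  shows "(q, q') \<notin> (out_of_subdividing E)\<^sup>+"
proof
  assume "(q, q') \<in> (out_of_subdividing E)\<^sup>+"
  then obtain m where qm: "(q, m) \<in> out_of_subdividing E" and "(m, q') \<in> (out_of_subdividing E)\<^sup>*"
    by (blast dest: tranclD)
  moreover have "m = b" using qm qb by (auto simp: subdividing_def intro: outdeg_1_unique)
  ultimately show False using not_rtrancl_out_of_subdividing_back[OF q'b] by simp
qed

text \<open>In general, suppression may merge two chains with the same ends into a single arc;
  the hypothesis \<open>first_arc_unique\<close> rules this out.\<close>
lemma last_arc_unique:
  assumes first_arc_unique: "\<And>a s s' b. (a, s) \<in> E \<Longrightarrow> (a, s') \<in> E \<Longrightarrow>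
      (s, b) \<in> (out_of_subdividing E)\<^sup>* \<Longrightarrow> (s', b) \<in> (out_of_subdividing E)\<^sup>* \<Longrightarrow> s = s'"
    and "(p, b) \<in> E" "(p', b) \<in> E"
    and "(a, p) \<in> (into_subdividing E)\<^sup>*" "(a, p') \<in> (into_subdividing E)\<^sup>*"
  shows "p = p'"
proof -
  have at_start: "p' = a" if "(a, b) \<in> E" "(p', b) \<in> E" "(a, p') \<in> (into_subdividing E)\<^sup>*" for p'
  proof (rule ccontr)
    assume "p' \<noteq> a"
    with that(3) have "(a, p') \<in> (into_subdividing E)\<^sup>+" by (auto simp: rtrancl_eq_or_trancl)
    with that(2) obtain s where "(a, s) \<in> E" "(s, p') \<in> (out_of_subdividing E)\<^sup>*"
        "(s, b) \<in> (out_of_subdividing E)\<^sup>*"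
      using first_arc_of_chain by blast
    moreover from this have "s = b" using first_arc_unique that(1) by blast
    ultimately show False using not_rtrancl_out_of_subdividing_back[OF that(2)] by simp
  qed
  show ?thesis
  proof (cases "p = a \<or> p' = a")
    case True
    then show ?thesis using at_start[of p'] at_start[of p] assms(2-5) by auto
  next
    case False
    with assms(4,5) have "(a, p) \<in> (into_subdividing E)\<^sup>+" "(a, p') \<in> (into_subdividing E)\<^sup>+"
      by (auto simp: rtrancl_eq_or_trancl)
    with assms(2,3) obtain s s' where s: "(a, s) \<in> E" "(s, p) \<in> (out_of_subdividing E)\<^sup>*"
        "(s, b) \<in> (out_of_subdividing E)\<^sup>*"
      and s': "(a, s') \<in> E" "(s', p') \<in> (out_of_subdividing E)\<^sup>*"
        "(s', b) \<in> (out_of_subdividing E)\<^sup>*"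
      using first_arc_of_chain by meson
    then have "s = s'" using first_arc_unique by blast
    from single_valued_confluent[OF single_valued_out_of_subdividing s(2) s'(2)[folded this]]
    show ?thesis
      using not_trancl_out_of_subdividing_between_preds assms(2,3) by (auto simp: rtrancl_eq_or_trancl)
  qed
qed

lemma outdeg_suppA:
  assumes first_arc_unique: "\<And>a s s' b. (a, s) \<in> E \<Longrightarrow> (a, s') \<in> E \<Longrightarrow>
      (s, b) \<in> (out_of_subdividing E)\<^sup>* \<Longrightarrow> (s', b) \<in> (out_of_subdividing E)\<^sup>* \<Longrightarrow> s = s'"
    and "a \<in> suppV W E"
  shows "outdeg (suppA W E) a = outdeg E a"
proof -
  have "{b. (a, b) \<in> suppA W E} =
        {b. \<exists>s \<in> {s. (a, s) \<in> E}. b \<in> suppV W E \<and> (s, b) \<in> (out_of_subdividing E)\<^sup>*}"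
    using assms(2) by (auto simp: suppA_iff)
  also have "card \<dots> = card {s. (a, s) \<in> E}"
  proof (rule card_functional_injective_rel)
    show "finite {s. (a, s) \<in> E}" using finite_arcs by (rule finite_out_arcs)
  next
    fix s assume "s \<in> {s. (a, s) \<in> E}"
    then have "s \<in> W" using arcs_subset by auto
    then show "\<exists>!b. b \<in> suppV W E \<and> (s, b) \<in> (out_of_subdividing E)\<^sup>*"
      using chain_end_exists chain_end_unique unfolding suppV_def by blast
  qed (use first_arc_unique in blast)
  finally show ?thesis unfolding outdeg_def .
qed

lemma indeg_suppA:
  assumes first_arc_unique: "\<And>a s s' b. (a, s) \<in> E \<Longrightarrow> (a, s') \<in> E \<Longrightarrow>
      (s, b) \<in> (out_of_subdividing E)\<^sup>* \<Longrightarrow> (s', b) \<in> (out_of_subdividing E)\<^sup>* \<Longrightarrow> s = s'"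
    and "b \<in> suppV W E"
  shows "indeg (suppA W E) b = indeg E b"
proof -
  have "{a. (a, b) \<in> suppA W E} =
        {a. \<exists>p \<in> {p. (p, b) \<in> E}. a \<in> suppV W E \<and> (a, p) \<in> (into_subdividing E)\<^sup>*}"
    using assms(2) by (auto simp: suppA_def)
  also have "card \<dots> = card {p. (p, b) \<in> E}"
  proof (rule card_functional_injective_rel)
    show "finite {p. (p, b) \<in> E}" using finite_arcs by (rule finite_in_arcs)
  next
    fix p assume "p \<in> {p. (p, b) \<in> E}"
    then have "p \<in> W" using arcs_subset by auto
    then show "\<exists>!a. a \<in> suppV W E \<and> (a, p) \<in> (into_subdividing E)\<^sup>*"
      using chain_start_exists chain_start_unique unfolding suppV_def by blast
  next
    fix p p' a
    assume "p \<in> {p. (p, b) \<in> E}" "p' \<in> {p. (p, b) \<in> E}"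
      and "a \<in> suppV W E \<and> (a, p) \<in> (into_subdividing E)\<^sup>*"
      and "a \<in> suppV W E \<and> (a, p') \<in> (into_subdividing E)\<^sup>*"
    then show "p = p'" by (intro last_arc_unique[OF first_arc_unique, where a=a and b=b]) auto
  qed
  finally show ?thesis unfolding indeg_def .
qed

end

section \<open>Visible vertices and the cover digraph\<close>

locale phylo_net =
  fixes X V :: "'v set" and A :: "('v \<times> 'v) set"
  assumes network: "phylo_network X V A"
begin

abbreviation \<rho> :: 'v where "\<rho> \<equiv> root V A"
abbreviation Vis :: "'v set" where "Vis \<equiv> Vvis X V A"
abbreviation Reach :: "('v \<times> 'v) set" where "Reach \<equiv> reach_vis X V A"
abbreviation Cov :: "('v \<times> 'v) set" where "Cov \<equiv> CovA X V A"

lemma finite_V: "finite V"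
  and arcs_subset: "A \<subseteq> V \<times> V"
  and acyclic_A: "acyclic A"
  and ex1_indeg_0: "\<exists>!\<rho>. \<rho> \<in> V \<and> indeg A \<rho> = 0"
  and vertex_types: "\<And>v. v \<in> V \<Longrightarrow> indeg A v \<noteq> 0 \<Longrightarrow>
        (indeg A v = 1 \<and> outdeg A v = 0) \<or>
        (indeg A v = 1 \<and> outdeg A v \<ge> 2) \<or>
        (outdeg A v = 1 \<and> indeg A v \<ge> 2)"
  and leaves_eq: "X = {v \<in> V. indeg A v = 1 \<and> outdeg A v = 0}"
  using network unfolding phylo_network_def by blast+

lemma finite_A: "finite A"
  using finite_V arcs_subset by (meson finite_SigmaI finite_subset)

lemma root_in_V: "\<rho> \<in> V" and indeg_root: "indeg A \<rho> = 0"
  using theI'[OF ex1_indeg_0] unfolding root_def by auto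

lemma eq_root_if_indeg_0: "v \<in> V \<Longrightarrow> indeg A v = 0 \<Longrightarrow> v = \<rho>"
  using ex1_indeg_0 root_in_V indeg_root by blast

lemma no_arc_into_root: "(u, \<rho>) \<notin> A"
  using indeg_root indeg_eq_0_iff[OF finite_A] by blast

lemma not_trancl_into_root: "(u, \<rho>) \<notin> A\<^sup>+"
  using no_arc_into_root by (metis tranclD2)

lemma not_rtrancl_back: "(u, v) \<in> A\<^sup>+ \<Longrightarrow> (v, u) \<notin> A\<^sup>*"
  using acyclic_A by (auto simp: acyclic_def dest: trancl_rtrancl_trancl)

lemma root_reaches: "v \<in> V \<Longrightarrow> (\<rho>, v) \<in> A\<^sup>*"
  using finite_acyclic_wf[OF finite_A acyclic_A]
proof (induction v rule: wf_induct_rule)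
  case (less v)
  show ?case
  proof (cases "v = \<rho>")
    case False
    with less.prems obtain u where "(u, v) \<in> A"
      using eq_root_if_indeg_0 indeg_eq_0_iff[OF finite_A] by blast
    moreover from this have "(\<rho>, u) \<in> A\<^sup>*" using less.IH arcs_subset by blast
    ultimately show ?thesis by simp
  qed simp
qed

lemma leaf_in_V: "x \<in> X \<Longrightarrow> x \<in> V"
  using leaves_eq by auto

lemma leaf_not_root: "x \<in> X \<Longrightarrow> x \<noteq> \<rho>"
  using leaves_eq indeg_root by auto

lemma no_arc_from_leaf: "x \<in> X \<Longrightarrow> (x, w) \<notin> A"
  using leaves_eq outdeg_eq_0_iff[OF finite_A] by auto

lemma not_trancl_from_leaf: "x \<in> X \<Longrightarrow> (x, w) \<notin> A\<^sup>+"
  using no_arc_from_leaf by (metis tranclD)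

lemma has_child:
  assumes "v \<in> V" "v \<noteq> \<rho>" "v \<notin> X"
  shows "\<exists>c. (v, c) \<in> A"
proof -
  have "indeg A v \<noteq> 0" using assms(1,2) eq_root_if_indeg_0 by blast
  have "outdeg A v \<noteq> 0"
  proof
    assume "outdeg A v = 0"
    with vertex_types[OF assms(1) \<open>indeg A v \<noteq> 0\<close>] have "indeg A v = 1" by auto
    with \<open>outdeg A v = 0\<close> assms(1,3) show False using leaves_eq by blast
  qed
  then show ?thesis unfolding outdeg_eq_0_iff[OF finite_A] by blast
qed

lemma reaches_leaf: "v \<in> V \<Longrightarrow> v \<noteq> \<rho> \<Longrightarrow> \<exists>x\<in>X. (v, x) \<in> A\<^sup>*"
  using finite_acyclic_wf_converse[OF finite_A acyclic_A]
proof (induction v rule: wf_induct_rule)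
  case (less v)
  show ?case
  proof (cases "v \<in> X")
    case False
    with less.prems obtain c where vc: "(v, c) \<in> A" using has_child by blast
    moreover from this have "c \<in> V" "c \<noteq> \<rho>" using arcs_subset no_arc_into_root by auto
    ultimately obtain x where "x \<in> X" "(c, x) \<in> A\<^sup>*" using less.IH by blast
    with vc show ?thesis by (meson converse_rtrancl_into_rtrancl)
  qed blast
qed

lemma visible_iff:
  "visible X V A v \<longleftrightarrow> v \<in> V \<and> (v = \<rho> \<or> (\<exists>x\<in>X. (\<rho>, x) \<notin> (Restr A (- {v}))\<^sup>*))"
proof -
  have paths: "(\<forall>p. dpath A p \<and> hd p = \<rho> \<and> last p = x \<longrightarrow> v \<in> set p) \<longleftrightarrow>
        \<not> (\<rho> \<noteq> v \<and> (\<rho>, x) \<in> (Restr A (- {v}))\<^sup>*)" for x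
    using ex_dpath_avoiding_iff[of A \<rho> x v] by blast
  have "(\<rho>, v) \<notin> (Restr A (- {v}))\<^sup>*" if "v \<in> X"
    using leaf_not_root[OF that] by (auto elim: rtranclE)
  then show ?thesis
    unfolding visible_def paths by auto
qed

lemma mem_Vis_iff: "v \<in> Vis \<longleftrightarrow> v \<in> V \<and> (v = \<rho> \<or> (\<exists>x\<in>X. (\<rho>, x) \<notin> (Restr A (- {v}))\<^sup>*))"
  by (simp add: Vvis_def visible_iff)

lemma Vis_subset: "Vis \<subseteq> V"
  by (auto simp: mem_Vis_iff)

lemma root_in_Vis: "\<rho> \<in> Vis"
  by (simp add: mem_Vis_iff root_in_V)

lemma leaf_in_Vis: "x \<in> X \<Longrightarrow> x \<in> Vis"
  unfolding Vvis_def visible_def using leaf_in_V by blast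

lemma reaches_visibility_witness: "(\<rho>, x) \<notin> (Restr A (- {v}))\<^sup>* \<Longrightarrow> x \<in> V \<Longrightarrow> (v, x) \<in> A\<^sup>*"
  using rtrancl_Restr_if_not_reaching_end[OF root_reaches] by blast

lemma parent_in_Vis:
  assumes v: "v \<in> Vis" "v \<noteq> \<rho>" "indeg A v = 1" and pv: "(p, v) \<in> A"
  shows "p \<in> Vis"
proof (cases "p = \<rho>")
  case False
  obtain x where x: "x \<in> X" "(\<rho>, x) \<notin> (Restr A (- {v}))\<^sup>*"
    using v(1,2) by (auto simp: mem_Vis_iff)
  have "(\<rho>, x) \<notin> (Restr A (- {p}))\<^sup>*"
    using rtrancl_Restr_switch_unique_pred[of v A p \<rho> x] indeg_1_unique[OF v(3) _ pv] v(2) x(2)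
    by blast
  moreover have "p \<in> V" using pv arcs_subset by auto
  ultimately show ?thesis using x(1) by (auto simp: mem_Vis_iff)
qed (simp add: root_in_Vis)

lemma child_in_Vis:
  assumes v: "v \<in> Vis" "v \<noteq> \<rho>" "v \<notin> X" "outdeg A v = 1" and vc: "(v, c) \<in> A"
  shows "c \<in> Vis"
proof -
  obtain x where x: "x \<in> X" "(\<rho>, x) \<notin> (Restr A (- {v}))\<^sup>*"
    using v(1,2) by (auto simp: mem_Vis_iff)
  have "(\<rho>, x) \<notin> (Restr A (- {c}))\<^sup>*"
    using rtrancl_Restr_switch_unique_succ[of v A c x \<rho>] outdeg_1_unique[OF v(4) vc] v(3) x
    by blast
  moreover have "c \<in> V" "c \<noteq> \<rho>" using vc arcs_subset no_arc_into_root by auto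
  ultimately show ?thesis using x(1) by (auto simp: mem_Vis_iff)
qed

lemma Reach_iff: "(u, v) \<in> Reach \<longleftrightarrow> u \<in> Vis \<and> v \<in> Vis \<and> (u, v) \<in> A\<^sup>+"
  using acyclic_A unfolding reach_vis_def acyclic_def by auto

lemma Reach_if_rtrancl: "u \<in> Vis \<Longrightarrow> v \<in> Vis \<Longrightarrow> (u, v) \<in> A\<^sup>* \<Longrightarrow> u \<noteq> v \<Longrightarrow> (u, v) \<in> Reach"
  by (simp add: Reach_iff rtrancl_eq_or_trancl)

lemma trans_Reach: "trans Reach"
  by (rule transI) (auto simp: Reach_iff)

lemma irrefl_Reach: "irrefl Reach"
  using acyclic_A by (auto simp: irrefl_def Reach_iff acyclic_def)

lemma finite_Reach: "finite Reach"
  by (rule finite_subset[of _ "V \<times> V"]) (use Vis_subset finite_V in \<open>auto simp: Reach_iff\<close>)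

lemma Cov_eq: "Cov = {e \<in> Reach. e \<notin> Reach O Reach}"
  unfolding CovA_def using trans_Reach by simp

lemma trancl_Cov: "Cov\<^sup>+ = Reach"
  using trancl_covers_eq[OF finite_Reach trans_Reach irrefl_Reach] by (simp add: Cov_eq)

lemma Cov_subset_Reach: "Cov \<subseteq> Reach"
  by (auto simp: Cov_eq)

lemma Cov_no_between: "(u, v) \<in> Cov \<Longrightarrow> (u, z) \<in> Reach \<Longrightarrow> (z, v) \<in> Reach \<Longrightarrow> False"
  by (auto simp: Cov_eq)

lemma rtrancl_Cov_cases: "(u, v) \<in> Cov\<^sup>* \<Longrightarrow> u = v \<or> (u, v) \<in> Reach"
  by (auto simp: rtrancl_eq_or_trancl trancl_Cov)

lemma rtrancl_Cov_into_A: "(u, v) \<in> Cov\<^sup>* \<Longrightarrow> (u, v) \<in> A\<^sup>*"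
  using rtrancl_Cov_cases[of u v] by (auto simp: Reach_iff)

sublocale cov: suppression Vis Cov
proof
  show "finite Cov" using finite_Reach Cov_subset_Reach by (rule finite_subset[rotated])
  show "acyclic Cov" using irrefl_Reach by (simp add: acyclic_irrefl trancl_Cov)
  show "Cov \<subseteq> Vis \<times> Vis" using Cov_subset_Reach by (auto simp: Reach_iff)
qed

lemma indeg_Cov_tree_vertex:
  assumes v: "v \<in> Vis" "v \<noteq> \<rho>" "indeg A v = 1"
  shows "indeg Cov v = 1"
proof -
  obtain p where pv: "(p, v) \<in> A"
    using v(3) unfolding indeg_eq_1_iff by blast
  have "p \<in> Vis" using parent_in_Vis[OF v pv] .
  have "(u, p) \<in> Reach" if "(u, v) \<in> Reach" "u \<noteq> p" for u
  proof -
    from that(1) obtain y where "(u, y) \<in> A\<^sup>*" "(y, v) \<in> A"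
      by (auto simp: Reach_iff dest: tranclD2)
    moreover from this have "y = p" using indeg_1_unique[OF v(3) _ pv] by blast
    ultimately show ?thesis using that \<open>p \<in> Vis\<close> by (auto simp: Reach_iff rtrancl_eq_or_trancl)
  qed
  moreover have "(p, v) \<in> Reach" using \<open>p \<in> Vis\<close> v(1) pv by (auto simp: Reach_iff)
  ultimately have "{u. (u, v) \<in> Cov} = {p}"
    using lower_covers_eq_singleton[OF trans_Reach irrefl_Reach] by (simp add: Cov_eq)
  then show ?thesis by (simp add: indeg_def)
qed

lemma outdeg_Cov_reticulation:
  assumes v: "v \<in> Vis" "v \<noteq> \<rho>" "v \<notin> X" "outdeg A v = 1"
  shows "outdeg Cov v = 1"
proof -
  obtain c where vc: "(v, c) \<in> A"
    using v(4) unfolding outdeg_eq_1_iff by blast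
  have "c \<in> Vis" using child_in_Vis[OF v vc] .
  have "(c, w) \<in> Reach" if "(v, w) \<in> Reach" "w \<noteq> c" for w
  proof -
    from that(1) obtain y where "(v, y) \<in> A" "(y, w) \<in> A\<^sup>*"
      by (auto simp: Reach_iff dest: tranclD)
    moreover from this have "y = c" using outdeg_1_unique[OF v(4) _ vc] by blast
    ultimately show ?thesis using that \<open>c \<in> Vis\<close> by (auto simp: Reach_iff rtrancl_eq_or_trancl)
  qed
  moreover have "(v, c) \<in> Reach" using \<open>c \<in> Vis\<close> v(1) vc by (auto simp: Reach_iff)
  ultimately have "{w. (v, w) \<in> Cov} = {c}"
    using upper_covers_eq_singleton[OF trans_Reach irrefl_Reach] by (simp add: Cov_eq)
  then show ?thesis by (simp add: outdeg_def)
qed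

lemma indeg_Cov_root: "indeg Cov \<rho> = 0"
proof -
  have "(u, \<rho>) \<notin> Cov" for u
    using Cov_subset_Reach not_trancl_into_root by (auto simp: Reach_iff)
  then show ?thesis by (simp add: indeg_def)
qed

lemma outdeg_Cov_leaf: "x \<in> X \<Longrightarrow> outdeg Cov x = 0"
proof -
  assume "x \<in> X"
  then have "(x, w) \<notin> Cov" for w
    using Cov_subset_Reach not_trancl_from_leaf by (auto simp: Reach_iff)
  then show ?thesis by (simp add: outdeg_def)
qed

lemma indeg_Cov_nonzero:
  assumes "v \<in> Vis" "v \<noteq> \<rho>"
  shows "indeg Cov v \<noteq> 0"
proof -
  have "(\<rho>, v) \<in> A\<^sup>*" using assms Vis_subset root_reaches by blast
  with assms have "(\<rho>, v) \<in> Cov\<^sup>+" by (auto simp: trancl_Cov Reach_iff root_in_Vis rtrancl_eq_or_trancl)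
  then show ?thesis using indeg_eq_0_iff[OF cov.finite_arcs] by (auto dest: tranclD2)
qed

lemma outdeg_Cov_nonzero:
  assumes "v \<in> Vis" "v \<noteq> \<rho>" "v \<notin> X"
  shows "outdeg Cov v \<noteq> 0"
proof -
  obtain c where vc: "(v, c) \<in> A" using assms Vis_subset has_child by blast
  moreover from this have "c \<in> V" "c \<noteq> \<rho>" using arcs_subset no_arc_into_root by auto
  ultimately obtain x where "x \<in> X" "(v, x) \<in> A\<^sup>+"
    using reaches_leaf by (meson rtrancl_into_trancl2)
  with assms(1) have "(v, x) \<in> Cov\<^sup>+" by (auto simp: trancl_Cov Reach_iff leaf_in_Vis)
  then show ?thesis using outdeg_eq_0_iff[OF cov.finite_arcs] by (auto dest: tranclD)
qed

lemma indeg_Cov_1_or_outdeg_Cov_1: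
  assumes "v \<in> Vis" "v \<noteq> \<rho>"
  shows "indeg Cov v = 1 \<or> outdeg Cov v = 1"
proof -
  have "v \<in> V" using assms(1) Vis_subset by blast
  moreover have "indeg A v \<noteq> 0" using calculation assms(2) eq_root_if_indeg_0 by blast
  ultimately have "indeg A v = 1 \<or> outdeg A v = 1" using vertex_types by auto
  moreover have "v \<notin> X" if "indeg A v \<noteq> 1" using that leaves_eq by auto
  ultimately have "indeg A v = 1 \<or> outdeg A v = 1 \<and> v \<notin> X" by blast
  then show ?thesis using assms indeg_Cov_tree_vertex outdeg_Cov_reticulation by blast
qed

lemma leaf_iff_Cov_degrees:
  assumes "v \<in> Vis"
  shows "v \<in> X \<longleftrightarrow> indeg Cov v = 1 \<and> outdeg Cov v = 0"
proof
  assume "v \<in> X"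
  then show "indeg Cov v = 1 \<and> outdeg Cov v = 0"
    using assms indeg_Cov_tree_vertex leaf_not_root outdeg_Cov_leaf leaves_eq by auto
next
  assume deg: "indeg Cov v = 1 \<and> outdeg Cov v = 0"
  then have "v \<noteq> \<rho>" using indeg_Cov_root by auto
  with deg show "v \<in> X" using assms outdeg_Cov_nonzero by blast
qed

lemma Cov_subset_Vis: "(u, v) \<in> Cov \<Longrightarrow> u \<in> Vis \<and> v \<in> Vis"
  using cov.arcs_subset by auto

lemma Cov_into_trancl: "(u, v) \<in> Cov \<Longrightarrow> (u, v) \<in> A\<^sup>+"
  using Cov_subset_Reach by (auto simp: Reach_iff)

section \<open>Chains of subdividing vertices in the cover digraph\<close>

lemma Cov_path_avoiding_lifts:
  assumes yb: "(y, b) \<in> Cov" and "(a, b) \<in> (Restr Cov (- {y}))\<^sup>*"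
  shows "(a, b) \<in> (Restr A (- {y}))\<^sup>*"
  using assms(2)
proof (induction rule: converse_rtrancl_induct)
  case (step x m)
  then have xm: "(x, m) \<in> Cov" "x \<noteq> y" "m \<noteq> y" by auto
  then have xm_A: "(x, m) \<in> A\<^sup>*" using Cov_into_trancl by (blast intro: trancl_into_rtrancl)
  have "(x, m) \<in> (Restr A (- {y}))\<^sup>*"
  proof (cases "(y, m) \<in> A\<^sup>*")
    case True
    have Vis: "x \<in> Vis" "m \<in> Vis" "y \<in> Vis" using Cov_subset_Vis xm(1) yb by blast+
    with True xm(3) have ym: "(y, m) \<in> Reach" by (simp add: Reach_if_rtrancl)
    have "(m, b) \<in> Cov\<^sup>*" using rtrancl_mono[OF Int_lower1] step.hyps(2) by blast
    then have "m = b" using rtrancl_Cov_cases Cov_no_between[OF yb ym] by blast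
    have "(x, y) \<notin> A\<^sup>*"
    proof
      assume "(x, y) \<in> A\<^sup>*"
      with Vis xm(2) have "(x, y) \<in> Reach" by (simp add: Reach_if_rtrancl)
      from Cov_no_between[OF xm(1) this ym] show False .
    qed
    then show ?thesis by (rule rtrancl_Restr_if_not_reached_from_start[OF xm_A])
  next
    case False
    then show ?thesis by (rule rtrancl_Restr_if_not_reaching_end[OF xm_A])
  qed
  from this step.IH show ?case by (rule rtrancl_trans)
qed simp

text \<open>A path from \<open>a\<close> to \<open>b\<close> avoiding \<open>y\<close> would extend to a path from the root to the leaf
  witnessing the visibility of \<open>y\<close> that still avoids \<open>y\<close>: the root reaches \<open>a\<close> and \<open>b\<close> reaches
  that leaf without passing \<open>y\<close>, as \<open>a\<close> lies strictly above and \<open>b\<close> strictly below \<open>y\<close>.\<close>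
lemma Cov_path_to_child_of_subdividing_meets:
  assumes y: "subdividing Cov y" and yb: "(y, b) \<in> Cov" and ay: "(a, y) \<in> Reach"
  shows "(a, b) \<notin> (Restr Cov (- {y}))\<^sup>*"
proof
  assume ab: "(a, b) \<in> (Restr Cov (- {y}))\<^sup>*"
  have "y \<in> Vis" using Cov_subset_Vis[OF yb] by blast
  moreover have "y \<noteq> \<rho>" using y indeg_Cov_root by (auto simp: subdividing_def)
  ultimately obtain x where x: "x \<in> X" "(\<rho>, x) \<notin> (Restr A (- {y}))\<^sup>*"
    by (auto simp: mem_Vis_iff)
  have "y \<notin> X" using y outdeg_Cov_leaf by (auto simp: subdividing_def)
  with x(1) have "x \<noteq> y" by blast
  moreover have "(y, x) \<in> A\<^sup>*" using reaches_visibility_witness[OF x(2) leaf_in_V[OF x(1)]] .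
  ultimately have "(y, x) \<in> Cov\<^sup>+"
    using Reach_if_rtrancl \<open>y \<in> Vis\<close> leaf_in_Vis[OF x(1)] by (simp add: trancl_Cov)
  then obtain m where ym: "(y, m) \<in> Cov" and "(m, x) \<in> Cov\<^sup>*" by (blast dest: tranclD)
  moreover have "m = b" using outdeg_1_unique[of Cov y m b] y ym yb by (simp add: subdividing_def)
  ultimately have "(b, x) \<in> A\<^sup>*" using rtrancl_Cov_into_A by blast
  moreover have "(b, y) \<notin> A\<^sup>*" using Cov_into_trancl[OF yb] by (rule not_rtrancl_back)
  ultimately have bx: "(b, x) \<in> (Restr A (- {y}))\<^sup>*" by (rule rtrancl_Restr_if_not_reached_from_start)
  have "(\<rho>, a) \<in> A\<^sup>*" using ay Vis_subset root_reaches by (auto simp: Reach_iff)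
  moreover have "(y, a) \<notin> A\<^sup>*" using ay not_rtrancl_back by (simp add: Reach_iff)
  ultimately have "(\<rho>, a) \<in> (Restr A (- {y}))\<^sup>*" by (rule rtrancl_Restr_if_not_reaching_end)
  then have "(\<rho>, x) \<in> (Restr A (- {y}))\<^sup>*"
    using rtrancl_trans[OF Cov_path_avoiding_lifts[OF yb ab] bx] by (rule rtrancl_trans)
  with x(2) show False ..
qed

lemma Reach_between_on_chain:
  assumes as: "(a, s) \<in> Cov" and "(s, b) \<in> (out_of_subdividing Cov)\<^sup>*"
    and "(a, z) \<in> Reach" and "(z, b) \<in> Reach"
  shows "(s, z) \<in> (out_of_subdividing Cov)\<^sup>*"
  using assms(2-4)
proof (induction arbitrary: z rule: rtrancl_induct)
  case base
  then show ?case using Cov_no_between[OF as] by blast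
next
  case (step y b)
  then have yb: "(y, b) \<in> Cov" and y: "subdividing Cov y" by auto
  have "(s, y) \<in> Cov\<^sup>*" using rtrancl_out_of_subdividing_subset step.hyps(1) by blast
  with as have "(a, y) \<in> Cov\<^sup>+" by (rule rtrancl_into_trancl2)
  then have no_bypass: "(a, b) \<notin> (Restr Cov (- {y}))\<^sup>*"
    using Cov_path_to_child_of_subdividing_meets[OF y yb] by (simp add: trancl_Cov)
  show ?case
  proof (cases "z = y")
    case False
    have "(a, z) \<in> Cov\<^sup>*" "(z, b) \<in> Cov\<^sup>*"
      using step.prems by (simp_all add: trancl_Cov[symmetric] trancl_into_rtrancl)
    then have "(a, z) \<in> (Restr Cov (- {y}))\<^sup>* \<or> (y, z) \<in> Cov\<^sup>*"
      "(z, b) \<in> (Restr Cov (- {y}))\<^sup>* \<or> (z, y) \<in> Cov\<^sup>*"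
      by (blast dest: rtrancl_Restr_or_through[where v=y])+
    moreover have "(y, z) \<in> Cov\<^sup>* \<Longrightarrow> (y, z) \<in> Reach" "(z, y) \<in> Cov\<^sup>* \<Longrightarrow> (z, y) \<in> Reach"
      using False rtrancl_Cov_cases by blast+
    ultimately consider "(z, y) \<in> Reach" | "(y, z) \<in> Reach"
      | "(a, z) \<in> (Restr Cov (- {y}))\<^sup>*" "(z, b) \<in> (Restr Cov (- {y}))\<^sup>*"
      by blast
    then show ?thesis
    proof cases
      case 1
      then show ?thesis using step.IH step.prems(1) by blast
    next
      case 2
      then show ?thesis using Cov_no_between[OF yb] step.prems(2) by blast
    next
      case 3
      from rtrancl_trans[OF 3] no_bypass show ?thesis by blast
    qed
  qed (use step.hyps(1) in simp)
qed

lemma Cov_chain_first_arc_unique: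
  assumes "(a, s) \<in> Cov" "(a, s') \<in> Cov"
    and "(s, b) \<in> (out_of_subdividing Cov)\<^sup>*" "(s', b) \<in> (out_of_subdividing Cov)\<^sup>*"
  shows "s = s'"
proof -
  have "s = s'"
    if as: "(a, s) \<in> Cov" and as': "(a, s') \<in> Cov"
      and sb: "(s, b) \<in> (out_of_subdividing Cov)\<^sup>*" and s'b: "(s', b) \<in> (out_of_subdividing Cov)\<^sup>*"
      and "s' \<noteq> b"
    for s s'
  proof (rule ccontr)
    assume "s \<noteq> s'"
    from s'b \<open>s' \<noteq> b\<close> have s'b_plus: "(s', b) \<in> (out_of_subdividing Cov)\<^sup>+"
      by (auto simp: rtrancl_eq_or_trancl)
    then obtain m where "(s', m) \<in> out_of_subdividing Cov" by (blast dest: tranclD)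
    then have s': "subdividing Cov s'" by simp
    have "(s', b) \<in> Reach"
      using trancl_mono[OF s'b_plus, of Cov] by (auto simp: trancl_Cov)
    moreover have "(a, s') \<in> Reach" using as' Cov_subset_Reach by blast
    ultimately have "(s, s') \<in> (out_of_subdividing Cov)\<^sup>*"
      using Reach_between_on_chain[OF as sb] by blast
    with \<open>s \<noteq> s'\<close> have "(s, s') \<in> (out_of_subdividing Cov)\<^sup>+"
      by (simp add: rtrancl_eq_or_trancl)
    then obtain y where "(s, y) \<in> (out_of_subdividing Cov)\<^sup>*" and ys': "(y, s') \<in> Cov"
      by (blast dest: tranclD2)
    then have "(s, y) \<in> Cov\<^sup>*" using rtrancl_out_of_subdividing_subset by blast
    moreover have "y = a"
      using indeg_1_unique[of Cov s' y a] s' ys' as' by (simp add: subdividing_def)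
    ultimately have "(a, a) \<in> Cov\<^sup>+" using as by (simp add: rtrancl_into_trancl2)
    then show False using irrefl_Reach by (simp add: trancl_Cov irrefl_def)
  qed
  from this[OF assms] this[OF assms(2,1,4,3)] show ?thesis by blast
qed

section \<open>Normalisation\<close>

lemma normV_eq: "normV X V A = suppV Vis Cov"
  by (simp add: normV_def)

lemma normA_eq: "normA X V A = suppA Vis Cov"
  by (simp add: normA_def)

lemma normA_no_shortcut:
  assumes ab: "(a, b) \<in> normA X V A"
  shows "(a, b) \<notin> normA X V A O (normA X V A)\<^sup>+"
proof
  assume "(a, b) \<in> normA X V A O (normA X V A)\<^sup>+"
  then obtain w where aw: "(a, w) \<in> normA X V A" and wb: "(w, b) \<in> (normA X V A)\<^sup>+" by blast
  obtain s where as: "(a, s) \<in> Cov" and sb: "(s, b) \<in> (out_of_subdividing Cov)\<^sup>*"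
    and b: "b \<in> suppV Vis Cov"
    using ab by (auto simp: normA_eq cov.suppA_iff)
  have "normA X V A \<subseteq> Reach"
    using cov.suppA_subset_trancl by (simp add: normA_eq trancl_Cov)
  then have "(a, w) \<in> Reach" "(w, b) \<in> Reach\<^sup>+"
    using aw trancl_mono[OF wb] by auto
  then have "(a, w) \<in> Reach" "(w, b) \<in> Reach" using trans_Reach by simp_all
  then have "(s, w) \<in> (out_of_subdividing Cov)\<^sup>*" by (rule Reach_between_on_chain[OF as sb])
  moreover have "w \<in> suppV Vis Cov" using aw by (auto simp: normA_eq cov.suppA_iff)
  ultimately have "w = b" using cov.chain_end_unique sb b by (auto simp: suppV_def)
  with \<open>(w, b) \<in> Reach\<close> irrefl_Reach show False by (auto simp: irrefl_def)
qed

lemma indeg_normA: "v \<in> normV X V A \<Longrightarrow> indeg (normA X V A) v = indeg Cov v"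
  using cov.indeg_suppA[OF Cov_chain_first_arc_unique] by (simp add: normV_eq normA_eq)

lemma outdeg_normA: "v \<in> normV X V A \<Longrightarrow> outdeg (normA X V A) v = outdeg Cov v"
  using cov.outdeg_suppA[OF Cov_chain_first_arc_unique] by (simp add: normV_eq normA_eq)

lemma finite_normV: "finite (normV X V A)"
  by (rule finite_subset[OF _ finite_V]) (use Vis_subset in \<open>auto simp: normV_eq suppV_def\<close>)

lemma root_in_normV: "\<rho> \<in> normV X V A"
  using root_in_Vis indeg_Cov_root by (simp add: normV_eq suppV_def subdividing_def)

lemma indeg_normA_eq_0_iff:
  assumes v: "v \<in> normV X V A"
  shows "indeg (normA X V A) v = 0 \<longleftrightarrow> v = \<rho>"
proof -
  have "v \<in> Vis" using v by (simp add: normV_eq suppV_def)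
  then show ?thesis
    unfolding indeg_normA[OF v] using indeg_Cov_nonzero indeg_Cov_root by blast
qed

lemma normA_vertex_types:
  assumes v: "v \<in> normV X V A" and "v \<noteq> \<rho>"
  shows "(indeg (normA X V A) v = 1 \<and> outdeg (normA X V A) v = 0) \<or>
    (indeg (normA X V A) v = 1 \<and> outdeg (normA X V A) v \<ge> 2) \<or>
    (outdeg (normA X V A) v = 1 \<and> indeg (normA X V A) v \<ge> 2)"
proof -
  have "v \<in> Vis" "\<not> subdividing Cov v" using v by (auto simp: normV_eq suppV_def)
  then have "indeg Cov v \<noteq> 0" "indeg Cov v = 1 \<or> outdeg Cov v = 1"
    and "\<not> (indeg Cov v = 1 \<and> outdeg Cov v = 1)"
    and "v \<in> X \<Longrightarrow> indeg Cov v = 1 \<and> outdeg Cov v = 0"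
    and "v \<notin> X \<Longrightarrow> outdeg Cov v \<noteq> 0"
    using indeg_Cov_nonzero indeg_Cov_1_or_outdeg_Cov_1 leaf_iff_Cov_degrees outdeg_Cov_nonzero
      \<open>v \<noteq> \<rho>\<close> by (simp_all add: subdividing_def)
  then show ?thesis
    unfolding indeg_normA[OF v] outdeg_normA[OF v] by (cases "v \<in> X") auto
qed

lemma leaves_eq_normA: "X = {v \<in> normV X V A. indeg (normA X V A) v = 1 \<and> outdeg (normA X V A) v = 0}"
proof (intro set_eqI iffI)
  fix x assume "x \<in> X"
  then have "x \<in> Vis" "indeg Cov x = 1" "outdeg Cov x = 0"
    using leaf_in_Vis leaf_iff_Cov_degrees by auto
  moreover from this have "x \<in> normV X V A" by (simp add: normV_eq suppV_def subdividing_def)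
  ultimately show "x \<in> {v \<in> normV X V A. indeg (normA X V A) v = 1 \<and> outdeg (normA X V A) v = 0}"
    using indeg_normA outdeg_normA by simp
next
  fix v assume "v \<in> {v \<in> normV X V A. indeg (normA X V A) v = 1 \<and> outdeg (normA X V A) v = 0}"
  then have "v \<in> Vis" "indeg Cov v = 1" "outdeg Cov v = 0"
    using indeg_normA outdeg_normA by (auto simp: normV_eq suppV_def)
  then show "v \<in> X" using leaf_iff_Cov_degrees by blast
qed

lemma normA_subset: "normA X V A \<subseteq> normV X V A \<times> normV X V A"
  unfolding normA_eq normV_eq by (rule cov.suppA_subset)

lemma acyclic_normA: "acyclic (normA X V A)"
  unfolding normA_eq by (rule cov.acyclic_suppA)

lemma ex1_root_normA: "\<exists>!r. r \<in> normV X V A \<and> indeg (normA X V A) r = 0"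
proof (rule ex1I[of _ \<rho>])
  show "\<rho> \<in> normV X V A \<and> indeg (normA X V A) \<rho> = 0"
    using root_in_normV indeg_normA_eq_0_iff[OF root_in_normV] by simp
next
  fix r assume "r \<in> normV X V A \<and> indeg (normA X V A) r = 0"
  then show "r = \<rho>" using indeg_normA_eq_0_iff by blast
qed

lemma phylo_network_normalisation: "phylo_network X (normV X V A) (normA X V A)"
proof -
  have "\<forall>v \<in> normV X V A. indeg (normA X V A) v \<noteq> 0 \<longrightarrow>
      (indeg (normA X V A) v = 1 \<and> outdeg (normA X V A) v = 0) \<or>
      (indeg (normA X V A) v = 1 \<and> outdeg (normA X V A) v \<ge> 2) \<or>
      (outdeg (normA X V A) v = 1 \<and> indeg (normA X V A) v \<ge> 2)"
  proof (intro ballI impI)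
    fix v assume v: "v \<in> normV X V A" and "indeg (normA X V A) v \<noteq> 0"
    then have "v \<noteq> \<rho>" using indeg_normA_eq_0_iff[OF v] by simp
    with v show "(indeg (normA X V A) v = 1 \<and> outdeg (normA X V A) v = 0) \<or>
        (indeg (normA X V A) v = 1 \<and> outdeg (normA X V A) v \<ge> 2) \<or>
        (outdeg (normA X V A) v = 1 \<and> indeg (normA X V A) v \<ge> 2)"
      by (rule normA_vertex_types)
  qed
  then show ?thesis
    unfolding phylo_network_def
    using finite_normV normA_subset acyclic_normA ex1_root_normA leaves_eq_normA by blast
qed

end

theorem lemma2:
  fixes X V :: "'v set" and A :: "('v \<times> 'v) set"
  assumes "finite X" and "phylo_network X V A"
  shows "(\<forall>e \<in> normA X V A. e \<notin> normA X V A O (normA X V A)\<^sup>+)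
         \<and> phylo_network X (normV X V A) (normA X V A)"
proof -
  interpret phylo_net X V A using assms(2) by (rule phylo_net.intro)
  show ?thesis using normA_no_shortcut phylo_network_normalisation by blast
qed

end
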